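(* Let $m\ge1$ and $0\le q\le m(m-1)/2$ be integers. (i) If a sequence $(\mu^{(n)})\subset\mathcal H^{\rm loc}_{q,m}$ converges algebraically to $\mu^{(\infty)}\in\mathcal H^{\rm loc}_m$, then it converges infinitesimally to $\mu^{(\infty)}$. (ii) The converse of (i) is false: there exist sequences in $\mathcal H^{\rm loc}_{q,m}$ (for suitable $q,m$) which converge infinitesimally to some $\mu^{(\infty)}\in\mathcal H^{\rm loc}_m$ but do not converge algebraically to it.
   Context: Notation. For $0\le q\le m(m-1)/2$ write $\mathbb R^{q+m}=\mathbb R^q\oplus\mathbb R^m$ with standard inner product $\langle\cdot,\cdot\rangle_{\rm st}$ on $\mathbb R^m$. Let $\mathcal V_{q,m}$ be the quotient of the space $\Lambda^2(\mathbb R^{q+m})^*\otimes\mathbb R^{q+m}$ of skew-symmetric brackets on $\mathbb R^{q+m}$ by the change-of-basis action of $\mathrm{GL}(q)\times\mathrm O(m)$ (block-diagonal in $\mathrm{GL}(q+m)$), with the quotient ("standard") topology. $\mathcal H^{\rm loc}_{q,m}\subset\mathcal V_{q,m}$ is the set of classes of brackets $\mu$ such that: (h1) $\mu$ satisfies the Jacobi identity, $\mu(\mathbb R^q,\mathbb R^q)\subset\mathbb R^q$, $\mu(\mathbb R^q,\mathbb R^m)\subset\mathbb R^m$; (h2) $\langle\mu(Z,X),Y\rangle_{\rm st}+\langle X,\mu(Z,Y)\rangle_{\rm st}=0$ for $X,Y\in\mathbb R^m$, $Z\in\mathbb R^q$; (h3) no nonzero $Z\in\mathbb R^q$ satisfies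 $\mu(Z,\mathbb R^m)=0$. $\mathcal H^{\rm loc}_m=\bigcup_q\mathcal H^{\rm loc}_{q,m}$. If $\tilde\mu$ satisfies (h1),(h2) but not (h3), let $\mathbb R^{q-q'}=\{Z\in\mathbb R^q:\tilde\mu(Z,\mathbb R^m)=0\}$ ($0\le q'<q$), choose a complement $\mathbb R^{q'}$ so that $\mathbb R^q=\mathbb R^{q-q'}\oplus\mathbb R^{q'}$, and define the restriction $\tilde\mu_{|q',m}=\mathrm{pr}_{\mathbb R^{q'+m}}\circ\tilde\mu|_{\mathbb R^{q'+m}\times\mathbb R^{q'+m}}$, where $\mathrm{pr}$ is the projection along $\mathbb R^{q-q'}$; then $\tilde\mu_{|q',m}\in\mathcal H^{\rm loc}_{q',m}$. Algebraic convergence. $(\mu^{(n)})\subset\mathcal H^{\rm loc}_{q,m}$ converges algebraically to $\mu^{(\infty)}\in\mathcal H^{\rm loc}_m$ if either (a) $\mu^{(\infty)}\in\mathcal H^{\rm loc}_{q,m}$ and $\mu^{(n)}\to\mu^{(\infty)}$ in $\mathcal V_{q,m}$, or (b) $\mu^{(\infty)}\in\mathcal H^{\rm loc}_{q',m}$ with $q'<q$ and $\mu^{(n)}\to\tilde\mu$ in $\mathcal V_{q,m}$ for some $\tilde\mu\in\mathcal V_{q,m}\setminus\mathcal H^{\rm loc}_{q,m}$ (satisfying (h1),(h2)) with $\tilde\mu_{|q',m}=\mu^{(\infty)}$. Each $\mu\in\mathcal H^{\rm loc}_m$ determines, uniquely up to equivariant local isometry, a locally homogeneous Riemannian $m$-manifold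 $(\mathsf G_\mu/\mathsf H_\mu,g_\mu)$ ($\mathsf G_\mu$ simply connected with Lie algebra $(\mathbb R^{q+m},\mu)$, $\mathsf H_\mu$ the connected subgroup with Lie algebra $\mathbb R^q$) with tangent space at the origin $o$ identified isometrically with $(\mathbb R^m,\langle,\rangle_{\rm st})$. With $\mathrm{Rm}(X\wedge Y)=\nabla_{[X,Y]}-[\nabla_X,\nabla_Y]$, let $\mathrm{Rm}^k(\mu)(X_1,\dots,X_k|Y_1\wedge Y_2)=((\nabla^{g_\mu})^k_{X_1,\dots,X_k}\mathrm{Rm})(Y_1\wedge Y_2)$ at $o$. Let $\imath(m)$ be the maximum Singer invariant of locally homogeneous spaces of dimension $\le m$ (the Singer invariant of $(M,g)$ being the least $k$ with $\mathfrak i(k)=\mathfrak i(k+1)$, where $\mathfrak i(k)=\{A\in\mathfrak{so}(T_pM):A\cdot(\nabla^j\mathrm{Rm})_p=0,\ 0\le j\le k\}$). Infinitesimal convergence. $(\mu^{(n)})$ converges infinitesimally to $\mu^{(\infty)}$ if for every $s\ge\imath(m)+2$ there exist $a_n\in\mathrm O(m)$ with $a_n\cdot\mathrm{Rm}^k(\mu^{(n)})\to\mathrm{Rm}^k(\mu^{(\infty)})$ for all $0\le k\le s$. *)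

theory Defs
  imports "HOL-Analysis.Analysis"
begin

text \<open>A bracket on R^(q+m) is given by its structure constants
  mu i j k = e_k-coefficient of mu(e_i,e_j), indices below q+m; indices 0..q-1
  span R^q, indices q..q+m-1 span R^m (orthonormal basis of the standard inner product).
  Matrices are functions nat => nat => real (row, column).\<close>

type_synonym brk = "nat \<Rightarrow> nat \<Rightarrow> nat \<Rightarrow> real"
type_synonym mat = "nat \<Rightarrow> nat \<Rightarrow> real"
type_synonym tensor = "nat list \<Rightarrow> real"

definition V_space :: "nat \<Rightarrow> nat \<Rightarrow> brk set" where
  "V_space q m = {\<mu>. (\<forall>i j k. \<mu> i j k = - \<mu> j i k) \<and>
     (\<forall>i j k. \<not> (i < q + m \<and> j < q + m \<and> k < q + m) \<longrightarrow> \<mu> i j k = 0)}"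

definition block :: "nat \<Rightarrow> nat \<Rightarrow> mat \<Rightarrow> mat \<Rightarrow> mat" where
  "block q m A B i j = (if i < q \<and> j < q then A i j
     else if q \<le> i \<and> i < q + m \<and> q \<le> j \<and> j < q + m then B (i - q) (j - q) else 0)"

definition is_inverse_pair :: "nat \<Rightarrow> mat \<Rightarrow> mat \<Rightarrow> bool" where
  "is_inverse_pair n A Ai \<longleftrightarrow>
     (\<forall>i<n. \<forall>j<n. (\<Sum>k<n. A i k * Ai k j) = (if i = j then 1 else 0)) \<and>
     (\<forall>i<n. \<forall>j<n. (\<Sum>k<n. Ai i k * A k j) = (if i = j then 1 else 0))"

definition orth :: "nat \<Rightarrow> mat \<Rightarrow> bool" where
  "orth m a \<longleftrightarrow> (\<forall>i<m. \<forall>j<m. (\<Sum>k<m. a k i * a k j) = (if i = j then 1 else 0))"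

definition transp :: "mat \<Rightarrow> mat" where "transp B i j = B j i"

text \<open>The group GL(q) x O(m), as pairs (h, h^-1) of block-diagonal matrices.\<close>
definition grp :: "nat \<Rightarrow> nat \<Rightarrow> (mat \<times> mat) set" where
  "grp q m = {(block q m A B, block q m Ai (transp B)) | A Ai B.
              is_inverse_pair q A Ai \<and> orth m B}"

text \<open>Change of basis action (h.mu)(X,Y) = h mu(h^-1 X, h^-1 Y).\<close>
definition act :: "nat \<Rightarrow> nat \<Rightarrow> mat \<times> mat \<Rightarrow> brk \<Rightarrow> brk" where
  "act q m g \<mu> i j k = (\<Sum>a<q+m. \<Sum>b<q+m. \<Sum>c<q+m.
       fst g k c * \<mu> a b c * snd g a i * snd g b j)"

definition same_class :: "nat \<Rightarrow> nat \<Rightarrow> brk \<Rightarrow> brk \<Rightarrow> bool" where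
  "same_class q m \<mu> \<nu> \<longleftrightarrow> (\<exists>g\<in>grp q m. act q m g \<mu> = \<nu>)"

definition saturated :: "nat \<Rightarrow> nat \<Rightarrow> brk set \<Rightarrow> bool" where
  "saturated q m W \<longleftrightarrow> (\<forall>\<mu>\<in>W. \<forall>g\<in>grp q m. act q m g \<mu> \<in> W)"

text \<open>Convergence of the classes [mu_n] to [mu] in the quotient topology of V_{q,m}:
  every open set of the quotient containing [mu] (= saturated open set of brackets
  containing mu) eventually contains [mu_n].\<close>
definition V_conv :: "nat \<Rightarrow> nat \<Rightarrow> (nat \<Rightarrow> brk) \<Rightarrow> brk \<Rightarrow> bool" where
  "V_conv q m \<mu>s \<mu> \<longleftrightarrow> (\<forall>W. openin (top_of_set (V_space q m)) W \<and> saturated q m W \<and> \<mu> \<in> W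
       \<longrightarrow> (\<forall>\<^sub>F n in sequentially. \<mu>s n \<in> W))"

definition jacobi :: "nat \<Rightarrow> brk \<Rightarrow> bool" where
  "jacobi N \<mu> \<longleftrightarrow> (\<forall>i<N. \<forall>j<N. \<forall>k<N. \<forall>l<N.
      (\<Sum>d<N. \<mu> i j d * \<mu> d k l + \<mu> j k d * \<mu> d i l + \<mu> k i d * \<mu> d j l) = 0)"

definition H12 :: "nat \<Rightarrow> nat \<Rightarrow> brk \<Rightarrow> bool" where
  "H12 q m \<mu> \<longleftrightarrow> \<mu> \<in> V_space q m \<and> jacobi (q + m) \<mu> \<and>
     (\<forall>i j k. i < q \<and> j < q \<and> q \<le> k \<and> k < q + m \<longrightarrow> \<mu> i j k = 0) \<and>
     (\<forall>i j k. i < q \<and> q \<le> j \<and> j < q + m \<and> k < q \<longrightarrow> \<mu> i j k = 0) \<and>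
     (\<forall>i j k. i < q \<and> q \<le> j \<and> j < q + m \<and> q \<le> k \<and> k < q + m \<longrightarrow> \<mu> i j k + \<mu> i k j = 0)"

text \<open>Z = sum z_i e_i (i<q) satisfies mu(Z, R^m) = 0.\<close>
definition kills_m :: "nat \<Rightarrow> nat \<Rightarrow> brk \<Rightarrow> (nat \<Rightarrow> real) \<Rightarrow> bool" where
  "kills_m q m \<mu> z \<longleftrightarrow> (\<forall>j k. q \<le> j \<and> j < q + m \<and> k < q + m \<longrightarrow> (\<Sum>i<q. z i * \<mu> i j k) = 0)"

definition Hloc :: "nat \<Rightarrow> nat \<Rightarrow> brk \<Rightarrow> bool" where
  "Hloc q m \<mu> \<longleftrightarrow> 2 * q \<le> m * (m - 1) \<and> H12 q m \<mu> \<and>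
     (\<forall>z. kills_m q m \<mu> z \<longrightarrow> (\<forall>i<q. z i = 0))"

text \<open>restr_rel q m mt q' nu: after a change of basis of R^q in which the kernel
  {Z in R^q : mt(Z,R^m)=0} is spanned by the first q-q' basis vectors (the remaining
  ones spanning the chosen complement R^q'), the restriction mt_{|q',m} lies in the
  class of nu in V_{q',m}.\<close>
definition restr_rel :: "nat \<Rightarrow> nat \<Rightarrow> brk \<Rightarrow> nat \<Rightarrow> brk \<Rightarrow> bool" where
  "restr_rel q m mt q' \<nu> \<longleftrightarrow> q' \<le> q \<and> (\<exists>A Ai. is_inverse_pair q A Ai \<and>
     (let \<rho> = act q m (block q m A (\<lambda>i j. if i = j then 1 else 0),
                       block q m Ai (\<lambda>i j. if i = j then 1 else 0)) mt;
          d = q - q' in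
      (\<forall>z. (\<forall>i\<ge>q. z i = 0) \<longrightarrow> (kills_m q m \<rho> z \<longleftrightarrow> (\<forall>i\<ge>d. z i = 0))) \<and>
      same_class q' m
        (\<lambda>i j k. if i < q' + m \<and> j < q' + m \<and> k < q' + m then \<rho> (i + d) (j + d) (k + d) else 0)
        \<nu>))"

definition alg_conv :: "nat \<Rightarrow> nat \<Rightarrow> (nat \<Rightarrow> brk) \<Rightarrow> nat \<Rightarrow> brk \<Rightarrow> bool" where
  "alg_conv q m \<mu>s q' \<nu> \<longleftrightarrow>
     (Hloc q' m \<nu>) \<and>
     ((q' = q \<and> V_conv q m \<mu>s \<nu>) \<or>
      (q' < q \<and> (\<exists>mt. H12 q m mt \<and> \<not> Hloc q m mt \<and> V_conv q m \<mu>s mt \<and> restr_rel q m mt q' \<nu>)))"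

text \<open>Levi-Civita Nomizu map at o: lam q m mu a b c = c-th component of Lambda(e_a) e_b,
  Lambda(X)Y = 1/2 [X,Y]_m + U(X,Y),
  <U(X,Y),Z> = 1/2 (<[Z,X]_m,Y> + <X,[Z,Y]_m>) (indices a,b,c < m refer to R^m).\<close>
definition lam :: "nat \<Rightarrow> nat \<Rightarrow> brk \<Rightarrow> nat \<Rightarrow> nat \<Rightarrow> nat \<Rightarrow> real" where
  "lam q m \<mu> a b c = \<mu> (q + a) (q + b) (q + c) / 2
     + (\<mu> (q + c) (q + a) (q + b) + \<mu> (q + c) (q + b) (q + a)) / 2"

text \<open>Rm(X/\Y) = nabla_[X,Y] - [nabla_X, nabla_Y] at o, i.e.
  Rm(X/\Y) = Lambda([X,Y]_m) + ad([X,Y]_h)|_m - [Lambda X, Lambda Y].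
  rm0 q m mu y1 y2 z w = w-th component of Rm(e_y1 /\ e_y2) e_z.\<close>
definition rm0 :: "nat \<Rightarrow> nat \<Rightarrow> brk \<Rightarrow> nat \<Rightarrow> nat \<Rightarrow> nat \<Rightarrow> nat \<Rightarrow> real" where
  "rm0 q m \<mu> x y z w =
      (\<Sum>c<m. \<mu> (q + x) (q + y) (q + c) * lam q m \<mu> c z w)
    + (\<Sum>i<q. \<mu> (q + x) (q + y) i * \<mu> i (q + z) (q + w))
    - (\<Sum>v<m. lam q m \<mu> x v w * lam q m \<mu> y z v - lam q m \<mu> y v w * lam q m \<mu> x z v)"

text \<open>Rmk q m k mu [x1,..,xk,y1,y2,z,w] = w-th component of
  ((nabla^k_{x1..xk} Rm)(e_y1 /\ e_y2)) e_z at o. Invariant tensors satisfy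
  nabla_X T = Lambda(X).T (derivation action); the output slot is treated
  covariantly via the standard inner product (Lambda(X) is skew).\<close>
fun Rmk :: "nat \<Rightarrow> nat \<Rightarrow> nat \<Rightarrow> brk \<Rightarrow> tensor" where
  "Rmk q m 0 \<mu> = (\<lambda>l. case l of [x, y, z, w] \<Rightarrow> rm0 q m \<mu> x y z w | _ \<Rightarrow> 0)"
| "Rmk q m (Suc k) \<mu> = (\<lambda>l. case l of [] \<Rightarrow> 0
     | x # r \<Rightarrow> - (\<Sum>p<length r. \<Sum>j<m. lam q m \<mu> x (r ! p) j * Rmk q m k \<mu> (r[p := j])))"

text \<open>Action of a in O(m) on tensors: (a.T)(X_1,...) = T(a^-1 X_1, ...).\<close>
definition act_t :: "nat \<Rightarrow> mat \<Rightarrow> tensor \<Rightarrow> tensor" where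
  "act_t m a T l = (\<Sum>js\<in>{js. length js = length l \<and> set js \<subseteq> {..<m}}.
       (\<Prod>r<length l. a (l ! r) (js ! r)) * T js)"

definition der :: "nat \<Rightarrow> mat \<Rightarrow> tensor \<Rightarrow> tensor" where
  "der m A T l = - (\<Sum>p<length l. \<Sum>i<m. A i (l ! p) * T (l[p := i]))"

definition so :: "nat \<Rightarrow> mat set" where
  "so m = {A. (\<forall>i j. A i j = - A j i) \<and> (\<forall>i j. \<not> (i < m \<and> j < m) \<longrightarrow> A i j = 0)}"

definition iset :: "nat \<Rightarrow> nat \<Rightarrow> brk \<Rightarrow> nat \<Rightarrow> mat set" where
  "iset q m \<mu> k = {A \<in> so m. \<forall>j\<le>k. \<forall>l. length l = j + 4 \<and> set l \<subseteq> {..<m} \<longrightarrow>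
       der m A (Rmk q m j \<mu>) l = 0}"

definition singer :: "nat \<Rightarrow> nat \<Rightarrow> brk \<Rightarrow> nat" where
  "singer q m \<mu> = (LEAST k. iset q m \<mu> k = iset q m \<mu> (Suc k))"

text \<open>imath m: maximum Singer invariant of locally homogeneous spaces of dimension <= m
  (every such space is (G_mu/H_mu, g_mu) for some mu in H^loc).\<close>
definition imath :: "nat \<Rightarrow> nat" where
  "imath m = Sup {singer q' m' \<mu> | q' m' \<mu>. m' \<le> m \<and> Hloc q' m' \<mu>}"

definition inf_conv :: "nat \<Rightarrow> nat \<Rightarrow> (nat \<Rightarrow> brk) \<Rightarrow> nat \<Rightarrow> brk \<Rightarrow> bool" where
  "inf_conv q m \<mu>s q' \<nu> \<longleftrightarrow> (\<forall>s\<ge>imath m + 2. \<exists>a. (\<forall>n. orth m (a n)) \<and>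
     (\<forall>k\<le>s. \<forall>l. length l = k + 4 \<and> set l \<subseteq> {..<m} \<longrightarrow>
        (\<lambda>n. act_t m (a n) (Rmk q m k (\<mu>s n)) l) \<longlonglongrightarrow> Rmk q' m k \<nu> l))"

end

(* A change of basis by (A, B) in GL(q) x O(m) acts on every curvature tensor
   Rm^k only through the rotation B, and Rm^k depends continuously on the structure
   constants. Convergence of the classes [mu_n] in the quotient V_{q,m} lifts to convergence
   of representatives g_n mu_n, so the Rm^k(mu_n), rotated by the O(m)-parts of the g_n,
   converge. In case (b) the directions of R^q acting trivially on R^m enter Rm^k only
   through the isotropy term of Rm^0, where they vanish, so the limit bracket and its
   restriction have the same curvature tensors up to a rotation.

   The abelian Lie algebra R^3 and the Lie algebra e(2) of rigid motions of the
   plane, each with an orthonormal basis, give flat spaces: the constant sequence of abelian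
   brackets converges infinitesimally to e(2). It does not converge algebraically, since the
   nonzero brackets form a saturated open set containing e(2) but not 0. *)

theory Submission
  imports Defs "Jordan_Normal_Form.Determinant"
begin

abbreviation id_mat :: Defs.mat where
  "id_mat \<equiv> \<lambda>i j. if i = j then 1 else 0"

definition mmul :: "nat \<Rightarrow> Defs.mat \<Rightarrow> Defs.mat \<Rightarrow> Defs.mat" where
  "mmul n A B i j = (\<Sum>k<n. A i k * B k j)"

lemma sum_delta_mult:
  assumes "finite S"
  shows "(\<Sum>j\<in>S. (if i = j then 1 else 0) * f j) = (if i \<in> S then f i else (0::real))"
proof -
  have "(\<Sum>j\<in>S. (if i = j then 1 else 0) * f j) = (\<Sum>j\<in>S. if i = j then f j else 0)"
    by (intro sum.cong) auto
  then show ?thesis using assms by simp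
qed

lemma sum_lessThan_add: "(\<Sum>a<q + m. f a) = (\<Sum>a<q. f a) + (\<Sum>a<m. f (q + a))"
  for q m :: nat
  by (induction m) (auto simp: add.assoc)

subsection \<open>Orthogonal matrices and their action on tensors\<close>

lemma act_t_Nil [simp]: "act_t m a T [] = T []"
proof -
  have "{js. length js = 0 \<and> set js \<subseteq> {..<m}} = {[]}" by auto
  then show ?thesis by (simp add: act_t_def)
qed

lemma act_t_Cons:
  "act_t m a T (x # l) = (\<Sum>j<m. a x j * act_t m a (\<lambda>ys. T (j # ys)) l)"
proof -
  let ?L = "{js. length js = length l \<and> set js \<subseteq> {..<m}}"
  have lists: "{js. length js = length (x # l) \<and> set js \<subseteq> {..<m}}
      = (\<lambda>(j, ys). j # ys) ` ({..<m} \<times> ?L)"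
    by (auto simp: length_Suc_conv image_iff)
  have "act_t m a T (x # l)
      = (\<Sum>(j, ys)\<in>{..<m} \<times> ?L. a x j * ((\<Prod>r<length l. a (l ! r) (ys ! r)) * T (j # ys)))"
    unfolding act_t_def lists
    by (subst sum.reindex)
      (auto simp: inj_on_def prod.lessThan_Suc_shift mult.assoc intro!: sum.cong
        simp del: prod.lessThan_Suc)
  also have "\<dots> = (\<Sum>j<m. a x j * act_t m a (\<lambda>ys. T (j # ys)) l)"
    by (simp add: sum.cartesian_product[symmetric] act_t_def sum_distrib_left)
  finally show ?thesis .
qed

lemma act_t_cong:
  assumes "\<And>ys. length ys = length l \<Longrightarrow> set ys \<subseteq> {..<m} \<Longrightarrow> T ys = T' ys"
  shows "act_t m a T l = act_t m a T' l"
  unfolding act_t_def using assms by (intro sum.cong) auto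

lemma act_t_sum: "act_t m a (\<lambda>ys. \<Sum>i\<in>I. f i ys) l = (\<Sum>i\<in>I. act_t m a (f i) l)"
  unfolding act_t_def by (simp add: sum_distrib_left) (rule sum.swap)

lemma act_t_scale: "act_t m a (\<lambda>ys. c * T ys) l = c * act_t m a T l"
  unfolding act_t_def by (simp add: sum_distrib_left algebra_simps)

lemma act_t_uminus: "act_t m a (\<lambda>ys. - T ys) l = - act_t m a T l"
  unfolding act_t_def by (simp add: sum_negf)

lemma act_t_zero: "act_t m a (\<lambda>ys. 0) l = 0"
  unfolding act_t_def by simp

lemma act_t_tendsto:
  assumes "\<And>ys. (\<lambda>n. Ts n ys) \<longlonglongrightarrow> T ys"
  shows "(\<lambda>n. act_t m a (Ts n) l) \<longlonglongrightarrow> act_t m a T l"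
  unfolding act_t_def by (intro tendsto_intros assms)

lemma act_t_id: "set l \<subseteq> {..<m} \<Longrightarrow> act_t m id_mat T l = T l"
  by (induction l arbitrary: T) (simp_all add: act_t_Cons sum_delta_mult)

lemma act_t_mmul: "act_t m (mmul m A B) T l = act_t m A (act_t m B T) l"
proof (induction l arbitrary: T)
  case (Cons x l)
  have "act_t m (mmul m A B) T (x # l)
      = (\<Sum>j<m. \<Sum>k<m. A x k * (B k j * act_t m A (act_t m B (\<lambda>ys. T (j # ys))) l))"
    by (simp add: act_t_Cons Cons mmul_def sum_distrib_right mult.assoc)
  also have "\<dots> = (\<Sum>k<m. A x k * (\<Sum>j<m. B k j * act_t m A (act_t m B (\<lambda>ys. T (j # ys))) l))"
    by (subst sum.swap) (simp add: sum_distrib_left)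
  also have "\<dots> = act_t m A (act_t m B T) (x # l)"
    by (simp add: act_t_Cons act_t_sum act_t_scale)
  finally show ?case .
qed simp

lemma orth_id: "orth m id_mat"
proof -
  have "(\<Sum>k<m. (if k = i then 1 else 0) * (if k = j then 1 else 0))
      = (if i = j \<and> i < m then 1 else (0::real))" for i j
    by (induction m) auto
  then show ?thesis unfolding orth_def by simp
qed

lemma orth_mmul:
  assumes "orth m A" "orth m B"
  shows "orth m (mmul m A B)"
  unfolding orth_def
proof (intro allI impI)
  fix i j assume ij: "i < m" "j < m"
  have "(\<Sum>k<m. mmul m A B k i * mmul m A B k j)
      = (\<Sum>k<m. \<Sum>s<m. \<Sum>t<m. B s i * B t j * (A k s * A k t))"
    by (simp add: mmul_def sum_product algebra_simps)
  also have "\<dots> = (\<Sum>s<m. \<Sum>t<m. B s i * B t j * (\<Sum>k<m. A k s * A k t))"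
    by (subst sum.swap) (simp add: sum_distrib_left, rule sum.cong[OF refl], rule sum.swap)
  also have "\<dots> = (\<Sum>s<m. \<Sum>t<m. B s i * B t j * (if s = t then 1 else 0))"
    using assms(1) unfolding orth_def by (intro sum.cong refl) auto
  also have "\<dots> = (\<Sum>s<m. B s i * B s j)"
    by (simp add: if_distrib cong: if_cong)
  also have "\<dots> = (if i = j then 1 else 0)"
    using assms(2) ij unfolding orth_def by auto
  finally show "(\<Sum>k<m. mmul m A B k i * mmul m A B k j) = (if i = j then 1 else 0)" .
qed

text \<open>A one-sided inverse of a square matrix is two-sided.\<close>
lemma orth_transp:
  assumes "orth m B"
  shows "orth m (transp B)"
proof -
  let ?M = "Matrix.mat m m (\<lambda>(i, j). B i j)"
  have M: "?M \<in> carrier_mat m m" "transpose_mat ?M \<in> carrier_mat m m"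
    by auto
  have "transpose_mat ?M * ?M = 1\<^sub>m m"
    using assms unfolding orth_def
    by (intro eq_matI) (auto simp: scalar_prod_def atLeast0LessThan)
  then have "?M * transpose_mat ?M = 1\<^sub>m m"
    using mat_mult_left_right_inverse[OF M(2) M(1)] by blast
  have "(\<Sum>k<m. B i k * B j k) = (if i = j then 1 else 0)" if "i < m" "j < m" for i j
  proof -
    have "(?M * transpose_mat ?M) $$ (i, j) = 1\<^sub>m m $$ (i, j)"
      using \<open>?M * transpose_mat ?M = 1\<^sub>m m\<close> by simp
    then show ?thesis
      using that by (auto simp: scalar_prod_def atLeast0LessThan)
  qed
  then show ?thesis
    unfolding orth_def transp_def by blast
qed

lemma orth_contract:
  assumes "orth m B" "c < m"
  shows "(\<Sum>j<m. B j c * (\<Sum>j'<m. B j j' * X j')) = X c"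
proof -
  have "(\<Sum>j<m. B j c * (\<Sum>j'<m. B j j' * X j')) = (\<Sum>j'<m. (\<Sum>j<m. B j c * B j j') * X j')"
    by (simp add: sum_distrib_left sum_distrib_right mult.assoc) (rule sum.swap)
  also have "\<dots> = (\<Sum>j'<m. (if c = j' then 1 else 0) * X j')"
    using assms unfolding orth_def by (intro sum.cong refl) auto
  finally show ?thesis using assms(2) by (simp add: sum_delta_mult)
qed

subsection \<open>Equivariance of the curvature tensors\<close>

definition conj_mat :: "nat \<Rightarrow> Defs.mat \<Rightarrow> Defs.mat \<Rightarrow> Defs.mat" where
  "conj_mat m B K b j = (\<Sum>b'<m. \<Sum>c'<m. B b b' * K b' c' * B j c')"

lemma conj_mat_contract:
  "(\<Sum>j<m. conj_mat m B K y j * Y j) = (\<Sum>b'<m. \<Sum>c'<m. B y b' * K b' c' * (\<Sum>j<m. B j c' * Y j))"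
proof -
  have "(\<Sum>j<m. conj_mat m B K y j * Y j)
      = (\<Sum>j<m. \<Sum>b'<m. \<Sum>c'<m. B y b' * K b' c' * (B j c' * Y j))"
    by (simp add: conj_mat_def sum_distrib_right mult.assoc)
  also have "\<dots> = (\<Sum>b'<m. \<Sum>c'<m. \<Sum>j<m. B y b' * K b' c' * (B j c' * Y j))"
    by (subst sum.swap) (rule sum.cong[OF refl], rule sum.swap)
  finally show ?thesis by (simp add: sum_distrib_left)
qed

lemma act_t_slot:
  assumes "orth m B" "set r \<subseteq> {..<m}" "p < length r"
  shows "act_t m B (\<lambda>ys. \<Sum>j<m. K (ys ! p) j * T (ys[p := j])) r
       = (\<Sum>j<m. conj_mat m B K (r ! p) j * act_t m B T (r[p := j]))"
  using assms(2,3)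
proof (induction r arbitrary: p T)
  case (Cons y r)
  show ?case
  proof (cases p)
    case 0
    have "act_t m B (\<lambda>ys. \<Sum>j<m. K (ys ! p) j * T (ys[p := j])) (y # r)
        = (\<Sum>b'<m. \<Sum>c'<m. B y b' * K b' c' * act_t m B (\<lambda>ys. T (c' # ys)) r)"
      using 0 by (simp add: act_t_Cons act_t_sum act_t_scale sum_distrib_left mult.assoc)
        (rule sum.swap)
    also have "\<dots> = (\<Sum>b'<m. \<Sum>c'<m. B y b' * K b' c'
                      * (\<Sum>j<m. B j c' * (\<Sum>j'<m. B j j' * act_t m B (\<lambda>ys. T (j' # ys)) r)))"
      by (intro sum.cong refl) (simp add: orth_contract[OF assms(1)])
    also have "\<dots> = (\<Sum>j<m. conj_mat m B K ((y # r) ! p) j * act_t m B T ((y # r)[p := j]))"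
      using 0 by (simp add: conj_mat_contract act_t_Cons)
    finally show ?thesis .
  next
    case (Suc p')
    have p': "p' < length r" "set r \<subseteq> {..<m}" using Cons.prems Suc by auto
    have "act_t m B (\<lambda>ys. \<Sum>j<m. K (ys ! p) j * T (ys[p := j])) (y # r)
        = (\<Sum>y'<m. B y y' * act_t m B (\<lambda>ys. \<Sum>j<m. K (ys ! p') j * T (y' # ys[p' := j])) r)"
      using Suc by (simp add: act_t_Cons)
    also have "\<dots> = (\<Sum>y'<m. \<Sum>j<m. conj_mat m B K (r ! p') j
                      * (B y y' * act_t m B (\<lambda>zs. T (y' # zs)) (r[p' := j])))"
    proof -
      have "act_t m B (\<lambda>ys. \<Sum>j<m. K (ys ! p') j * T (y' # ys[p' := j])) r
          = (\<Sum>j<m. conj_mat m B K (r ! p') j * act_t m B (\<lambda>zs. T (y' # zs)) (r[p' := j]))"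
        for y'
        using Cons.IH[OF p'(2) p'(1), of "\<lambda>zs. T (y' # zs)"] by simp
      then show ?thesis by (simp add: sum_distrib_left mult.left_commute)
    qed
    also have "\<dots> = (\<Sum>j<m. conj_mat m B K ((y # r) ! p) j * act_t m B T ((y # r)[p := j]))"
      using Suc by (subst sum.swap) (simp add: act_t_Cons sum_distrib_left)
    finally show ?thesis .
  qed
qed simp

text \<open>For an invariant tensor T, nabla_x T = L(x) . T with L the Nomizu map acting as a
  derivation; the direction x is the first index.\<close>
definition cov_deriv :: "nat \<Rightarrow> (nat \<Rightarrow> nat \<Rightarrow> nat \<Rightarrow> real) \<Rightarrow> tensor \<Rightarrow> tensor" where
  "cov_deriv m L T l = (case l of [] \<Rightarrow> 0
     | x # r \<Rightarrow> - (\<Sum>p<length r. \<Sum>j<m. L x (r ! p) j * T (r[p := j])))"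

lemma Rmk_Suc: "Rmk q m (Suc k) \<mu> = cov_deriv m (lam q m \<mu>) (Rmk q m k \<mu>)"
  by (rule ext) (simp add: cov_deriv_def split: list.split)

lemma cov_deriv_act_t:
  assumes B: "orth m B"
    and L': "\<And>x b c. x < m \<Longrightarrow> b < m \<Longrightarrow> c < m \<Longrightarrow>
               L' x b c = (\<Sum>x'<m. B x x' * conj_mat m B (L x') b c)"
    and T': "\<And>l. set l \<subseteq> {..<m} \<Longrightarrow> T' l = act_t m B T l"
    and l: "set l \<subseteq> {..<m}"
  shows "cov_deriv m L' T' l = act_t m B (cov_deriv m L T) l"
proof (cases l)
  case (Cons x r)
  have xr: "x < m" "set r \<subseteq> {..<m}" using l Cons by auto
  have upd: "set (r[p := j]) \<subseteq> {..<m}" if "j < m" for p j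
    using xr(2) that set_update_subset_insert[of r p j] by auto
  have rp: "r ! p < m" if "p < length r" for p
    using xr(2) that nth_mem by blast
  have "act_t m B (cov_deriv m L T) l
      = (\<Sum>x'<m. B x x' * act_t m B (\<lambda>ys. - (\<Sum>p<length r. \<Sum>j<m.
                                               L x' (ys ! p) j * T (ys[p := j]))) r)"
    using Cons by (simp add: act_t_Cons cov_deriv_def)
      (intro sum.cong refl arg_cong2[where f="(*)"] act_t_cong, simp)
  also have "\<dots> = (\<Sum>x'<m. B x x' * - (\<Sum>p<length r. \<Sum>j<m. conj_mat m B (L x') (r ! p) j
                                                * act_t m B T (r[p := j])))"
    using act_t_slot[OF B xr(2)] by (simp add: act_t_uminus act_t_sum)
  also have "\<dots> = - (\<Sum>p<length r. \<Sum>j<m. (\<Sum>x'<m. B x x' * conj_mat m B (L x') (r ! p) j)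
                                          * act_t m B T (r[p := j]))"
    by (simp add: sum_distrib_left sum_distrib_right sum_negf mult.assoc)
      (subst sum.swap, rule sum.cong[OF refl], subst sum.swap, simp)
  also have "\<dots> = cov_deriv m L' T' l"
    using Cons xr rp upd by (simp add: cov_deriv_def L' T')
  finally show ?thesis by simp
qed (simp add: cov_deriv_def)

definition rot :: "nat \<Rightarrow> Defs.mat \<Rightarrow> (nat \<Rightarrow> real) \<Rightarrow> nat \<Rightarrow> real" where
  "rot m B f a = (\<Sum>a'<m. B a a' * f a')"

definition rot2 :: "nat \<Rightarrow> Defs.mat \<Rightarrow> (nat \<Rightarrow> nat \<Rightarrow> real) \<Rightarrow> nat \<Rightarrow> nat \<Rightarrow> real" where
  "rot2 m B F a b = rot m B (\<lambda>a'. rot m B (\<lambda>b'. F a' b') b) a"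

definition rot3 ::
  "nat \<Rightarrow> Defs.mat \<Rightarrow> (nat \<Rightarrow> nat \<Rightarrow> nat \<Rightarrow> real) \<Rightarrow> nat \<Rightarrow> nat \<Rightarrow> nat \<Rightarrow> real" where
  "rot3 m B F a b c = rot m B (\<lambda>a'. rot m B (\<lambda>b'. rot m B (\<lambda>c'. F a' b' c') c) b) a"

definition rot4 :: "nat \<Rightarrow> Defs.mat \<Rightarrow> (nat \<Rightarrow> nat \<Rightarrow> nat \<Rightarrow> nat \<Rightarrow> real)
    \<Rightarrow> nat \<Rightarrow> nat \<Rightarrow> nat \<Rightarrow> nat \<Rightarrow> real" where
  "rot4 m B F a b c d =
     rot m B (\<lambda>a'. rot m B (\<lambda>b'. rot m B (\<lambda>c'. rot m B (\<lambda>d'. F a' b' c' d') d) c) b) a"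

lemma rot_swap:
  "rot m B (\<lambda>a'. rot m B (\<lambda>b'. F a' b') b) a = rot m B (\<lambda>b'. rot m B (\<lambda>a'. F a' b') a) b"
  unfolding rot_def by (simp add: sum_distrib_left mult.left_commute) (rule sum.swap)

lemma rot_mult_right: "rot m B f a * X = rot m B (\<lambda>a'. f a' * X) a"
  unfolding rot_def by (simp add: sum_distrib_right mult.assoc)

lemma rot_mult_left: "X * rot m B f a = rot m B (\<lambda>a'. X * f a') a"
  unfolding rot_def by (simp add: sum_distrib_left mult.left_commute)

lemma rot_sum: "(\<Sum>i\<in>I. rot m B (f i) a) = rot m B (\<lambda>a'. \<Sum>i\<in>I. f i a') a"
  unfolding rot_def by (simp add: sum_distrib_left) (rule sum.swap)

lemma rot_add: "rot m B f a + rot m B g a = rot m B (\<lambda>a'. f a' + g a') a"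
  unfolding rot_def by (simp add: sum.distrib algebra_simps)

lemma rot_diff: "rot m B f a - rot m B g a = rot m B (\<lambda>a'. f a' - g a') a"
  unfolding rot_def by (simp add: sum_subtractf algebra_simps)

lemma rot_divide: "rot m B f a / d = rot m B (\<lambda>a'. f a' / d) a"
  unfolding rot_def by (simp add: sum_divide_distrib)

lemma rot_inner:
  assumes "orth m B"
  shows "(\<Sum>c<m. rot m B f c * rot m B g c) = (\<Sum>c<m. f c * g c)"
proof -
  have "(\<Sum>c<m. rot m B f c * rot m B g c) = (\<Sum>a<m. f a * (\<Sum>c<m. B c a * rot m B g c))"
    unfolding rot_def[of m B f]
    by (simp add: sum_distrib_right sum_distrib_left mult_ac) (rule sum.swap)
  also have "\<dots> = (\<Sum>a<m. f a * g a)"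
    unfolding rot_def using orth_contract[OF assms] by (intro sum.cong refl) simp
  finally show ?thesis .
qed

lemma rot3_eq_rot_rot2_last: "rot3 m B F x y c = rot m B (\<lambda>c'. rot2 m B (\<lambda>x' y'. F x' y' c') x y) c"
  unfolding rot3_def rot2_def by (subst rot_swap) (rule rot_swap)

lemma rot3_eq_rot_rot2_mid: "rot3 m B F x v w = rot m B (\<lambda>v'. rot2 m B (\<lambda>x' w'. F x' v' w') x w) v"
  unfolding rot3_def rot2_def by (rule rot_swap)

lemma rot3_eq_rot_rot2_first: "rot3 m B F x y c = rot m B (\<lambda>x'. rot2 m B (F x') y c) x"
  unfolding rot3_def rot2_def ..

lemma rot3_perm_cab: "rot3 m B F c a b = rot3 m B (\<lambda>a b c. F c a b) a b c"
proof -
  have "rot m B (\<lambda>c'. rot m B (\<lambda>b'. F c' a' b') b) c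
      = rot m B (\<lambda>b'. rot m B (\<lambda>c'. F c' a' b') c) b" for a'
    by (rule rot_swap)
  then show ?thesis
    unfolding rot3_def by (subst rot_swap) simp
qed

lemma rot3_perm_cba: "rot3 m B F c b a = rot3 m B (\<lambda>a b c. F c b a) a b c"
proof -
  have "rot3 m B F c b a = rot3 m B (\<lambda>b a c. F c b a) b a c"
    by (rule rot3_perm_cab)
  also have "\<dots> = rot3 m B (\<lambda>a b c. F c b a) a b c"
    unfolding rot3_def by (rule rot_swap)
  finally show ?thesis .
qed

lemma rot2_mult: "rot2 m B F x y * rot2 m B G z w = rot4 m B (\<lambda>x y z w. F x y * G z w) x y z w"
proof -
  have R: "rot2 m B F x y * R = rot m B (\<lambda>x'. rot m B (\<lambda>y'. F x' y' * R) y) x" for R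
    unfolding rot2_def by (simp only: rot_mult_right)
  show ?thesis
    unfolding R rot4_def rot2_def[of m B G] by (simp only: rot_mult_left)
qed

lemma rot2_sum_left:
  "(\<Sum>i\<in>I. k i * rot2 m B (F i) a b) = rot2 m B (\<lambda>a' b'. \<Sum>i\<in>I. k i * F i a' b') a b"
  unfolding rot2_def by (simp only: rot_mult_left rot_sum)

lemma rot4_sum: "(\<Sum>i\<in>I. rot4 m B (F i) x y z w) = rot4 m B (\<lambda>x y z w. \<Sum>i\<in>I. F i x y z w) x y z w"
  unfolding rot4_def by (simp only: rot_sum)

lemma rot4_add:
  "rot4 m B F x y z w + rot4 m B G x y z w = rot4 m B (\<lambda>x y z w. F x y z w + G x y z w) x y z w"
  unfolding rot4_def by (simp only: rot_add)

lemma rot4_diff: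
  "rot4 m B F x y z w - rot4 m B G x y z w = rot4 m B (\<lambda>x y z w. F x y z w - G x y z w) x y z w"
  unfolding rot4_def by (simp only: rot_diff)

lemma rot4_perm_bacd: "rot4 m B H y x z w = rot4 m B (\<lambda>x y z w. H y x z w) x y z w"
  unfolding rot4_def by (rule rot_swap)

lemma rot4_perm_adbc: "rot4 m B H x w y z = rot4 m B (\<lambda>x y z w. H x w y z) x y z w"
proof -
  have "rot m B (\<lambda>w'. rot m B (\<lambda>z'. H x' w' y' z') z) w
      = rot m B (\<lambda>z'. rot m B (\<lambda>w'. H x' w' y' z') w) z" for x' y'
    by (rule rot_swap)
  then show ?thesis
    unfolding rot4_def by (subst rot_swap) simp
qed

lemma rot3_contract_last_first:
  assumes "orth m B"
  shows "(\<Sum>c<m. rot3 m B F x y c * rot3 m B G c z w)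
       = rot4 m B (\<lambda>x y z w. \<Sum>c<m. F x y c * G c z w) x y z w"
proof -
  have "(\<Sum>c<m. rot3 m B F x y c * rot3 m B G c z w)
      = (\<Sum>c<m. rot2 m B (\<lambda>x' y'. F x' y' c) x y * rot2 m B (G c) z w)"
    unfolding rot3_eq_rot_rot2_last[of m B F] rot3_eq_rot_rot2_first[of m B G]
    by (rule rot_inner[OF assms])
  then show ?thesis
    by (simp only: rot2_mult rot4_sum)
qed

lemma rot3_contract_mid_last:
  assumes "orth m B"
  shows "(\<Sum>v<m. rot3 m B F x v w * rot3 m B G y z v)
       = rot4 m B (\<lambda>x y z w. \<Sum>v<m. F x v w * G y z v) x y z w"
proof -
  have "(\<Sum>v<m. rot3 m B F x v w * rot3 m B G y z v)
      = (\<Sum>v<m. rot2 m B (\<lambda>x' w'. F x' v w') x w * rot2 m B (\<lambda>y' z'. G y' z' v) y z)"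
    unfolding rot3_eq_rot_rot2_mid[of m B F] rot3_eq_rot_rot2_last[of m B G]
    by (rule rot_inner[OF assms])
  also have "\<dots> = (\<Sum>v<m. rot4 m B (\<lambda>x y z w. F x v w * G y z v) x y z w)"
    by (simp only: rot2_mult) (intro sum.cong refl rot4_perm_adbc)
  finally show ?thesis
    by (simp only: rot4_sum)
qed

abbreviation block_pair :: "nat \<Rightarrow> nat \<Rightarrow> Defs.mat \<Rightarrow> Defs.mat \<Rightarrow> Defs.mat \<Rightarrow> Defs.mat \<times> Defs.mat"
  where "block_pair q m A Ai B \<equiv> (block q m A B, block q m Ai (transp B))"

text \<open>Suffixes m and q say whether an index lies in R^m or in R^q.\<close>
lemma act_block_pair_mmm:
  assumes "a < m" "b < m" "c < m"
  shows "act q m (block_pair q m A Ai B) \<mu> (q + a) (q + b) (q + c)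
       = rot3 m B (\<lambda>a' b' c'. \<mu> (q + a') (q + b') (q + c')) a b c"
  using assms
  by (simp add: act_def sum_lessThan_add block_def transp_def rot3_def rot_def sum_distrib_left
      mult_ac cong: sum.cong_simp)

lemma act_block_pair_mmq:
  assumes "a < m" "b < m" "i < q"
  shows "act q m (block_pair q m A Ai B) \<mu> (q + a) (q + b) i
       = rot2 m B (\<lambda>a' b'. \<Sum>i'<q. A i i' * \<mu> (q + a') (q + b') i') a b"
  using assms
  by (simp add: act_def sum_lessThan_add block_def transp_def rot2_def rot_def sum_distrib_left
      mult_ac cong: sum.cong_simp)

lemma act_block_pair_qmm:
  assumes "b < m" "c < m" "i < q"
  shows "act q m (block_pair q m A Ai B) \<mu> i (q + b) (q + c)
       = (\<Sum>i'<q. Ai i' i * rot2 m B (\<lambda>b' c'. \<mu> i' (q + b') (q + c')) b c)"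
  using assms
  by (simp add: act_def sum_lessThan_add block_def transp_def rot2_def rot_def sum_distrib_left
      mult_ac cong: sum.cong_simp)

lemma inverse_pair_contract:
  assumes "is_inverse_pair q A Ai"
  shows "(\<Sum>i<q. (\<Sum>i''<q. A i i'' * X i'') * (\<Sum>i'<q. Ai i' i * Y i')) = (\<Sum>i<q. X i * Y i)"
proof -
  have "(\<Sum>i<q. (\<Sum>i''<q. A i i'' * X i'') * (\<Sum>i'<q. Ai i' i * Y i'))
      = (\<Sum>i<q. \<Sum>i''<q. \<Sum>i'<q. A i i'' * Ai i' i * X i'' * Y i')"
    by (simp add: sum_product mult_ac)
  also have "\<dots> = (\<Sum>i''<q. \<Sum>i'<q. \<Sum>i<q. A i i'' * Ai i' i * X i'' * Y i')"
    by (subst sum.swap) (rule sum.cong[OF refl], rule sum.swap)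
  also have "\<dots> = (\<Sum>i''<q. \<Sum>i'<q. (\<Sum>i<q. Ai i' i * A i i'') * X i'' * Y i')"
    by (simp add: sum_distrib_left sum_distrib_right mult_ac)
  also have "\<dots> = (\<Sum>i''<q. \<Sum>i'<q. if i' = i'' then X i'' * Y i' else 0)"
    using assms unfolding is_inverse_pair_def by (intro sum.cong refl) auto
  finally show ?thesis by simp
qed

context
  fixes q m :: nat and A Ai B :: Defs.mat and \<mu> :: brk
  assumes B: "orth m B" and A: "is_inverse_pair q A Ai"
begin

lemma lam_act:
  assumes "a < m" "b < m" "c < m"
  shows "lam q m (act q m (block_pair q m A Ai B) \<mu>) a b c = rot3 m B (lam q m \<mu>) a b c"
proof -
  let ?M = "\<lambda>a' b' c'. \<mu> (q + a') (q + b') (q + c')"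
  have "lam q m (act q m (block_pair q m A Ai B) \<mu>) a b c
      = rot3 m B ?M a b c / 2 + (rot3 m B ?M c a b + rot3 m B ?M c b a) / 2"
    unfolding lam_def using assms by (simp add: act_block_pair_mmm)
  also have "\<dots> = rot3 m B (lam q m \<mu>) a b c"
    unfolding rot3_perm_cab[of m B ?M c a b] rot3_perm_cba[of m B ?M c b a] lam_def
    unfolding rot3_def by (simp only: rot_add rot_divide)
  finally show ?thesis .
qed

lemma rm0_act:
  assumes "x < m" "y < m" "z < m" "w < m"
  shows "rm0 q m (act q m (block_pair q m A Ai B) \<mu>) x y z w = rot4 m B (rm0 q m \<mu>) x y z w"
proof -
  let ?\<nu> = "act q m (block_pair q m A Ai B) \<mu>"
  let ?M = "\<lambda>a' b' c'. \<mu> (q + a') (q + b') (q + c')"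
  let ?L = "lam q m \<mu>"
  have bracket_term: "(\<Sum>c<m. ?\<nu> (q + x) (q + y) (q + c) * lam q m ?\<nu> c z w)
      = rot4 m B (\<lambda>x y z w. \<Sum>c<m. ?M x y c * ?L c z w) x y z w"
  proof -
    have "(\<Sum>c<m. ?\<nu> (q + x) (q + y) (q + c) * lam q m ?\<nu> c z w)
        = (\<Sum>c<m. rot3 m B ?M x y c * rot3 m B ?L c z w)"
      using assms by (intro sum.cong refl) (simp add: act_block_pair_mmm lam_act)
    then show ?thesis
      by (simp only: rot3_contract_last_first[OF B])
  qed
  have isotropy_term: "(\<Sum>i<q. ?\<nu> (q + x) (q + y) i * ?\<nu> i (q + z) (q + w))
      = rot4 m B (\<lambda>x y z w. \<Sum>i<q. \<mu> (q + x) (q + y) i * \<mu> i (q + z) (q + w)) x y z w"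
  proof -
    have "(\<Sum>i<q. ?\<nu> (q + x) (q + y) i * ?\<nu> i (q + z) (q + w))
        = (\<Sum>i<q. rot2 m B (\<lambda>a' b'. \<Sum>i'<q. A i i' * \<mu> (q + a') (q + b') i') x y
                 * rot2 m B (\<lambda>b' c'. \<Sum>i'<q. Ai i' i * \<mu> i' (q + b') (q + c')) z w)"
      using assms
      by (intro sum.cong refl) (simp add: act_block_pair_mmq act_block_pair_qmm rot2_sum_left)
    then show ?thesis
      by (simp only: rot2_mult rot4_sum inverse_pair_contract[OF A])
  qed
  have commutator_term:
    "(\<Sum>v<m. lam q m ?\<nu> x v w * lam q m ?\<nu> y z v - lam q m ?\<nu> y v w * lam q m ?\<nu> x z v)
      = rot4 m B (\<lambda>x y z w. \<Sum>v<m. ?L x v w * ?L y z v - ?L y v w * ?L x z v) x y z w"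
  proof -
    have "(\<Sum>v<m. lam q m ?\<nu> x v w * lam q m ?\<nu> y z v - lam q m ?\<nu> y v w * lam q m ?\<nu> x z v)
        = rot4 m B (\<lambda>x y z w. \<Sum>v<m. ?L x v w * ?L y z v) x y z w
          - rot4 m B (\<lambda>y x z w. \<Sum>v<m. ?L y v w * ?L x z v) y x z w"
      using assms by (simp add: lam_act sum_subtractf rot3_contract_mid_last[OF B])
    then show ?thesis
      by (simp only: rot4_perm_bacd[of m B "\<lambda>y x z w. \<Sum>v<m. ?L y v w * ?L x z v" y x z w]
          rot4_diff sum_subtractf)
  qed
  show ?thesis
    unfolding rm0_def[of q m ?\<nu>] bracket_term isotropy_term commutator_term
    by (simp only: rot4_add rot4_diff) (simp add: rm0_def[abs_def])
qed

end

lemma Rmk_0_eq: "Rmk q m 0 \<mu> l = (if length l = 4 then rm0 q m \<mu> (l!0) (l!1) (l!2) (l!3) else 0)"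
  by (auto split: list.split simp: numeral_eq_Suc)

lemma act_t_4: "act_t m B T [x, y, z, w] = rot4 m B (\<lambda>a b c d. T [a, b, c, d]) x y z w"
  by (simp add: act_t_Cons rot4_def rot_def)

lemma Rmk_act:
  assumes B: "orth m B" and A: "is_inverse_pair q A Ai" and l: "set l \<subseteq> {..<m}"
  shows "Rmk q m k (act q m (block_pair q m A Ai B) \<mu>) l = act_t m B (Rmk q m k \<mu>) l"
  using l
proof (induction k arbitrary: l)
  case 0
  show ?case
  proof (cases "length l = 4")
    case True
    then obtain x y z w where "l = [x, y, z, w]"
      by (auto simp: numeral_eq_Suc length_Suc_conv)
    then show ?thesis
      using "0.prems" by (simp add: act_t_4 rm0_act[OF B A])
  next
    case False
    have "act_t m B (Rmk q m 0 \<mu>) l = act_t m B (\<lambda>ys. 0) l"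
      by (rule act_t_cong) (simp only: Rmk_0_eq, simp add: False)
    also have "\<dots> = Rmk q m 0 (act q m (block_pair q m A Ai B) \<mu>) l"
      using False by (simp only: act_t_zero Rmk_0_eq if_False)
    finally show ?thesis ..
  qed
next
  case (Suc k)
  have "lam q m (act q m (block_pair q m A Ai B) \<mu>) x b c
      = (\<Sum>x'<m. B x x' * conj_mat m B (lam q m \<mu> x') b c)"
    if "x < m" "b < m" "c < m" for x b c
    using that
    by (simp add: lam_act[OF B A] rot3_def rot_def conj_mat_def sum_distrib_left mult_ac)
  then show ?case
    unfolding Rmk_Suc using Suc by (intro cov_deriv_act_t[OF B]) auto
qed

lemma Rmk_act_GL:
  assumes "is_inverse_pair q A Ai" "set l \<subseteq> {..<m}"
  shows "Rmk q m k (act q m (block_pair q m A Ai id_mat) \<mu>) l = Rmk q m k \<mu> l"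
  using Rmk_act[OF orth_id assms] act_t_id[OF assms(2)] by simp

lemma grp_iff:
  "g \<in> grp q m \<longleftrightarrow> (\<exists>A Ai B. g = block_pair q m A Ai B \<and> is_inverse_pair q A Ai \<and> orth m B)"
  unfolding grp_def by blast

lemma is_inverse_pair_id: "is_inverse_pair q id_mat id_mat"
  unfolding is_inverse_pair_def by (simp add: sum_delta_mult)

lemma block_pair_id_in_grp: "block_pair q m id_mat id_mat id_mat \<in> grp q m"
  unfolding grp_iff using is_inverse_pair_id orth_id by blast

lemma mmul_assoc: "mmul n (mmul n A B) C = mmul n A (mmul n B C)"
proof (intro ext)
  fix i j
  have "mmul n (mmul n A B) C i j = (\<Sum>s<n. \<Sum>k<n. A i s * B s k * C k j)"
    by (simp add: mmul_def sum_distrib_right) (rule sum.swap)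
  also have "\<dots> = mmul n A (mmul n B C) i j"
    by (simp add: mmul_def sum_distrib_left mult.assoc)
  finally show "mmul n (mmul n A B) C i j = mmul n A (mmul n B C) i j" .
qed

lemma mmul_id_on_right:
  assumes "\<And>k j. k < n \<Longrightarrow> j < n \<Longrightarrow> X k j = id_mat k j" "j < n"
  shows "mmul n Z X i j = Z i j"
proof -
  have "mmul n Z X i j = (\<Sum>k<n. (if j = k then 1 else 0) * Z i k)"
    unfolding mmul_def using assms by (intro sum.cong) auto
  then show ?thesis using assms(2) by (simp add: sum_delta_mult)
qed

lemma mmul_id_on_left:
  assumes "\<And>i k. i < n \<Longrightarrow> k < n \<Longrightarrow> X i k = id_mat i k" "i < n"
  shows "mmul n X Z i j = Z i j"
proof -
  have "mmul n X Z i j = (\<Sum>k<n. (if i = k then 1 else 0) * Z k j)"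
    unfolding mmul_def using assms by (intro sum.cong) auto
  then show ?thesis using assms(2) by (simp add: sum_delta_mult)
qed

lemma is_inverse_pair_mmul_id:
  assumes "is_inverse_pair q A Ai" "i < q" "j < q"
  shows "mmul q A Ai i j = id_mat i j" and "mmul q Ai A i j = id_mat i j"
  using assms unfolding is_inverse_pair_def mmul_def by auto

lemma orth_mmul_id:
  assumes "orth m E" "i < m" "j < m"
  shows "mmul m (transp E) E i j = id_mat i j"
  using assms unfolding orth_def mmul_def transp_def by auto

lemma transp_mmul_transp: "transp (mmul m B (transp E)) = mmul m E (transp B)"
  by (intro ext) (simp add: transp_def mmul_def mult.commute)

lemma is_inverse_pair_mmul:
  assumes A: "is_inverse_pair q A Ai" and C: "is_inverse_pair q C Ci"
  shows "is_inverse_pair q (mmul q A Ci) (mmul q C Ai)"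
proof -
  have "mmul q (mmul q X Yi) (mmul q Y Xi) i j = id_mat i j"
    if XY: "is_inverse_pair q X Xi" "is_inverse_pair q Y Yi" and ij: "i < q" "j < q"
    for X Xi Y Yi i j
  proof -
    have "mmul q (mmul q X Yi) (mmul q Y Xi) i j = mmul q X (mmul q (mmul q Yi Y) Xi) i j"
      by (simp add: mmul_assoc)
    also have "\<dots> = mmul q X Xi i j"
    proof -
      have "mmul q (mmul q Yi Y) Xi k j = Xi k j" if "k < q" for k
        using is_inverse_pair_mmul_id(2)[OF XY(2)] that by (intro mmul_id_on_left) auto
      then show ?thesis
        unfolding mmul_def[of q X] by (intro sum.cong refl) simp
    qed
    finally show ?thesis
      using is_inverse_pair_mmul_id(1)[OF XY(1) ij] by simp
  qed
  from this[OF A C] this[OF C A] show ?thesis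
    unfolding is_inverse_pair_def mmul_def by auto
qed

lemma mmul_block:
  "mmul (q + m) (block q m A B) (block q m C E) = block q m (mmul q A C) (mmul m B E)"
proof (intro ext)
  fix i j
  show "mmul (q + m) (block q m A B) (block q m C E) i j = block q m (mmul q A C) (mmul m B E) i j"
    unfolding mmul_def sum_lessThan_add
    by (cases "i < q"; cases "j < q"; cases "i < q + m"; cases "j < q + m")
      (simp_all add: block_def mmul_def cong: sum.cong_simp)
qed

lemma block_cong:
  assumes "\<And>i j. i < q \<Longrightarrow> j < q \<Longrightarrow> A i j = A' i j" "\<And>i j. i < m \<Longrightarrow> j < m \<Longrightarrow> B i j = B' i j"
  shows "block q m A B = block q m A' B'"
  using assms by (intro ext) (auto simp: block_def)

lemma act_act:
  "act q m (G1, H1) (act q m (G2, H2) \<mu>) = act q m (mmul (q + m) G1 G2, mmul (q + m) H2 H1) \<mu>"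
proof (intro ext)
  fix i j k
  let ?S = "{..<q + m} \<times> {..<q + m} \<times> {..<q + m}"
  have triple: "(\<Sum>a<q + m. \<Sum>b<q + m. \<Sum>c<q + m. F a b c) = (\<Sum>(a, b, c)\<in>?S. F a b c)" for F
    by (simp add: sum.cartesian_product)
  have inner: "(\<Sum>(a, b, c)\<in>?S. G1 k c * G2 c c' * \<mu> a' b' c' * H2 a' a * H2 b' b * H1 a i * H1 b j)
      = mmul (q + m) G1 G2 k c' * \<mu> a' b' c' * mmul (q + m) H2 H1 a' i * mmul (q + m) H2 H1 b' j"
    for a' b' c'
    unfolding mmul_def triple[symmetric]
    by (simp add: sum_distrib_left sum_distrib_right mult_ac)
      (subst sum.swap, rule sum.cong[OF refl], rule sum.swap)
  have "act q m (G1, H1) (act q m (G2, H2) \<mu>) i j k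
      = (\<Sum>(a', b', c')\<in>?S. \<Sum>(a, b, c)\<in>?S. G1 k c * G2 c c' * \<mu> a' b' c'
           * H2 a' a * H2 b' b * H1 a i * H1 b j)"
    unfolding act_def triple
    by (simp add: sum_distrib_left sum_distrib_right mult_ac case_prod_beta) (rule sum.swap)
  also have "\<dots> = act q m (mmul (q + m) G1 G2, mmul (q + m) H2 H1) \<mu> i j k"
    unfolding inner unfolding act_def triple by simp
  finally show "act q m (G1, H1) (act q m (G2, H2) \<mu>) i j k
      = act q m (mmul (q + m) G1 G2, mmul (q + m) H2 H1) \<mu> i j k" .
qed
text \<open>The witness is g' = g h^-1.\<close>
lemma grp_act_quotient:
  assumes g: "g \<in> grp q m" and h: "h \<in> grp q m"
  obtains g' where "g' \<in> grp q m" "\<And>\<mu>. act q m g' (act q m h \<mu>) = act q m g \<mu>"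
proof -
  obtain A Ai B where gA: "g = block_pair q m A Ai B" "is_inverse_pair q A Ai" "orth m B"
    using g unfolding grp_iff by blast
  obtain C Ci E where hC: "h = block_pair q m C Ci E" "is_inverse_pair q C Ci" "orth m E"
    using h unfolding grp_iff by blast
  let ?g' = "block_pair q m (mmul q A Ci) (mmul q C Ai) (mmul m B (transp E))"
  have "?g' \<in> grp q m"
    unfolding grp_iff
    using is_inverse_pair_mmul[OF gA(2) hC(2)] orth_mmul[OF gA(3) orth_transp[OF hC(3)]] by blast
  have "block q m (mmul q (mmul q A Ci) C) (mmul m (mmul m B (transp E)) E) = block q m A B"
    unfolding mmul_assoc
    using is_inverse_pair_mmul_id(2)[OF hC(2)] orth_mmul_id[OF hC(3)]
    by (intro block_cong mmul_id_on_right) auto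
  moreover
  have "block q m (mmul q Ci (mmul q C Ai)) (mmul m (transp E) (transp (mmul m B (transp E))))
      = block q m Ai (transp B)"
    unfolding transp_mmul_transp mmul_assoc[symmetric]
    using is_inverse_pair_mmul_id(2)[OF hC(2)] orth_mmul_id[OF hC(3)]
    by (intro block_cong mmul_id_on_left) auto
  ultimately have "act q m ?g' (act q m h \<mu>) = act q m g \<mu>" for \<mu>
    unfolding gA(1) hC(1) act_act mmul_block by simp
  with \<open>?g' \<in> grp q m\<close> that show ?thesis by blast
qed

lemma block_id_mat: "block q m id_mat id_mat i j = (if i < q + m \<and> i = j then 1 else 0)"
  by (auto simp: block_def)

lemma block_eq_0: "q + m \<le> i \<or> q + m \<le> j \<Longrightarrow> block q m A B i j = 0"
  by (auto simp: block_def)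

lemma transp_id_mat: "transp id_mat = id_mat"
  by (intro ext) (simp add: transp_def)

lemma V_space_outside:
  "\<mu> \<in> V_space q m \<Longrightarrow> \<not> (i < q + m \<and> j < q + m \<and> k < q + m) \<Longrightarrow> \<mu> i j k = 0"
  unfolding V_space_def by blast

lemma V_space_skew: "\<mu> \<in> V_space q m \<Longrightarrow> \<mu> i j k = - \<mu> j i k"
  unfolding V_space_def by blast

lemma act_id:
  assumes "\<mu> \<in> V_space q m"
  shows "act q m (block_pair q m id_mat id_mat id_mat) \<mu> = \<mu>"
proof (intro ext)
  fix i j k
  let ?N = "q + m"
  have guard: "(\<Sum>x\<in>S. if P then f x else 0) = (if P then sum f S else 0)"
    for P S and f :: "nat \<Rightarrow> real"
    by simp
  have "act q m (block_pair q m id_mat id_mat id_mat) \<mu> i j k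
      = (\<Sum>a<?N. \<Sum>b<?N. \<Sum>c<?N. if c = k then if b = j then if a = i then
           \<mu> a b c else 0 else 0 else 0)"
    unfolding act_def transp_id_mat block_id_mat by (intro sum.cong refl) auto
  also have "\<dots> = (if i < ?N \<and> j < ?N \<and> k < ?N then \<mu> i j k else 0)"
    by (simp add: guard)
  also have "\<dots> = \<mu> i j k"
    using V_space_outside[OF assms] by simp
  finally show "act q m (block_pair q m id_mat id_mat id_mat) \<mu> i j k = \<mu> i j k" .
qed

lemma act_V_space:
  assumes g: "g \<in> grp q m" and \<mu>: "\<mu> \<in> V_space q m"
  shows "act q m g \<mu> \<in> V_space q m"
proof -
  obtain A Ai B where gA: "g = block_pair q m A Ai B"
    using g unfolding grp_iff by blast
  have "act q m g \<mu> j i k = - act q m g \<mu> i j k" for i j k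
  proof -
    have "act q m g \<mu> j i k
        = (\<Sum>b<q + m. \<Sum>a<q + m. \<Sum>c<q + m. fst g k c * \<mu> a b c * snd g a j * snd g b i)"
      unfolding act_def by (rule sum.swap)
    also have "\<dots> = (\<Sum>b<q + m. \<Sum>a<q + m. - (\<Sum>c<q + m. fst g k c * \<mu> b a c * snd g b i * snd g a j))"
    proof (intro sum.cong refl)
      fix a b
      show "(\<Sum>c<q + m. fst g k c * \<mu> a b c * snd g a j * snd g b i)
          = - (\<Sum>c<q + m. fst g k c * \<mu> b a c * snd g b i * snd g a j)"
        by (simp add: V_space_skew[OF \<mu>, of a b] sum_negf[symmetric] mult_ac)
    qed
    finally show ?thesis
      unfolding act_def by (simp add: sum_negf)
  qed
  moreover have "act q m g \<mu> i j k = 0" if "\<not> (i < q + m \<and> j < q + m \<and> k < q + m)" for i j k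
  proof -
    have "fst g k c * \<mu> a b c * snd g a i * snd g b j = 0" for a b c
      using that unfolding gA by (auto simp: block_eq_0)
    then show ?thesis
      unfolding act_def by (simp only: sum.neutral_const)
  qed
  ultimately show ?thesis
    unfolding V_space_def by blast
qed

lemma grp_act_Rmk:
  assumes "g \<in> grp q m"
  obtains B where "orth m B"
    "\<And>k l. set l \<subseteq> {..<m} \<Longrightarrow> Rmk q m k (act q m g \<mu>) l = act_t m B (Rmk q m k \<mu>) l"
  using assms Rmk_act unfolding grp_iff by metis

subsection \<open>Lifting convergence from the quotient V_{q,m}\<close>

lemma continuous_on_bracket_coeff: "continuous_on UNIV (\<lambda>\<mu>::brk. \<mu> a b c)"
  using continuous_on_product_then_coordinatewise[OF
      continuous_on_product_then_coordinatewise[OF continuous_on_product_coordinates]] .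

lemma continuous_on_act_coeff: "continuous_on UNIV (\<lambda>\<mu>::brk. act q m g \<mu> i j k)"
  unfolding act_def by (intro continuous_intros continuous_on_bracket_coeff)

definition box_dist :: "nat \<Rightarrow> brk \<Rightarrow> brk \<Rightarrow> real" where
  "box_dist N \<mu> \<nu> = (\<Sum>i<N. \<Sum>j<N. \<Sum>k<N. \<bar>\<nu> i j k - \<mu> i j k\<bar>)"

lemma box_dist_nonneg: "0 \<le> box_dist N \<mu> \<nu>"
  unfolding box_dist_def by (intro sum_nonneg) auto

lemma box_dist_self: "box_dist N \<mu> \<mu> = 0"
  unfolding box_dist_def by simp

lemma box_dist_coeff_le:
  assumes "i < N" "j < N" "k < N"
  shows "\<bar>\<nu> i j k - \<mu> i j k\<bar> \<le> box_dist N \<mu> \<nu>"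
proof -
  have "\<bar>\<nu> i j k - \<mu> i j k\<bar> \<le> (\<Sum>k<N. \<bar>\<nu> i j k - \<mu> i j k\<bar>)"
    using assms by (intro member_le_sum) auto
  also have "\<dots> \<le> (\<Sum>j<N. \<Sum>k<N. \<bar>\<nu> i j k - \<mu> i j k\<bar>)"
    using assms by (intro member_le_sum[where f="\<lambda>j. \<Sum>k<N. \<bar>\<nu> i j k - \<mu> i j k\<bar>"] sum_nonneg) auto
  also have "\<dots> \<le> box_dist N \<mu> \<nu>"
    unfolding box_dist_def using assms
    by (intro member_le_sum[where f="\<lambda>i. \<Sum>j<N. \<Sum>k<N. \<bar>\<nu> i j k - \<mu> i j k\<bar>"] sum_nonneg) auto
  finally show ?thesis .
qed

lemma continuous_on_box_dist_act: "continuous_on UNIV (\<lambda>\<nu>. box_dist N \<mu> (act q m g \<nu>))"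
  unfolding box_dist_def by (intro continuous_intros continuous_on_act_coeff)

lemma minimizing_seq_exists:
  fixes f :: "nat \<Rightarrow> 'a \<Rightarrow> real"
  assumes X: "X \<noteq> {}" and nonneg: "\<And>n x. x \<in> X \<Longrightarrow> 0 \<le> f n x"
    and small: "\<And>\<epsilon>. \<epsilon> > 0 \<Longrightarrow> \<forall>\<^sub>F n in sequentially. \<exists>x\<in>X. f n x < \<epsilon>"
  obtains xs where "\<And>n. xs n \<in> X" "(\<lambda>n. f n (xs n)) \<longlonglongrightarrow> 0"
proof -
  define e where "e n = Inf (f n ` X)" for n
  have bdd: "bdd_below (f n ` X)" for n
    using nonneg by (intro bdd_belowI) auto
  have e_nonneg: "0 \<le> e n" for n
    unfolding e_def using X nonneg by (intro cInf_greatest) auto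
  have e_lim: "e \<longlonglongrightarrow> 0"
  proof (rule order_tendstoI)
    fix a :: real assume "a < 0"
    then show "\<forall>\<^sub>F n in sequentially. a < e n"
      using e_nonneg by (intro always_eventually) (auto intro: less_le_trans)
  next
    fix a :: real assume "0 < a"
    from small[OF this] show "\<forall>\<^sub>F n in sequentially. e n < a"
      unfolding e_def by eventually_elim (meson bdd cInf_lower image_eqI le_less_trans)
  qed
  have "\<exists>x\<in>X. f n x < e n + inverse (real (Suc n))" for n
  proof -
    have "Inf (f n ` X) < e n + inverse (real (Suc n))"
      unfolding e_def by simp
    then show ?thesis
      using cInf_lessD[of "f n ` X"] X by blast
  qed
  then obtain xs where xs: "\<And>n. xs n \<in> X" "\<And>n. f n (xs n) < e n + inverse (real (Suc n))"
    by metis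
  have "(\<lambda>n. f n (xs n)) \<longlonglongrightarrow> 0"
  proof (rule tendsto_sandwich[of "\<lambda>n. 0" _ _ "\<lambda>n. e n + inverse (real (Suc n))"])
    show "(\<lambda>n. e n + inverse (real (Suc n))) \<longlonglongrightarrow> 0"
      using tendsto_add[OF e_lim LIMSEQ_inverse_real_of_nat] by simp
    show "\<forall>\<^sub>F n in sequentially. f n (xs n) \<le> e n + inverse (real (Suc n))"
      using xs(2) by (intro always_eventually allI less_imp_le)
  qed (use xs nonneg in auto)
  with xs(1) that show ?thesis by blast
qed

text \<open>The brackets whose orbit comes epsilon-close to the limit form a saturated open set.\<close>
lemma V_conv_lift:
  assumes conv: "V_conv q m \<mu>s \<mu>" and \<mu>: "\<mu> \<in> V_space q m" and \<mu>s: "\<And>n. \<mu>s n \<in> V_space q m"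
  obtains gs where "\<And>n. gs n \<in> grp q m"
    "\<And>i j k. (\<lambda>n. act q m (gs n) (\<mu>s n) i j k) \<longlonglongrightarrow> \<mu> i j k"
proof -
  define N where "N = q + m"
  define near where
    "near \<epsilon> = {\<nu> \<in> V_space q m. \<exists>g\<in>grp q m. box_dist N \<mu> (act q m g \<nu>) < \<epsilon>}" for \<epsilon>
  have "openin (top_of_set (V_space q m)) (near \<epsilon>)" for \<epsilon>
  proof -
    have "open (\<Union>g\<in>grp q m. {\<nu>. box_dist N \<mu> (act q m g \<nu>) < \<epsilon>})"
      by (intro open_UN ballI open_Collect_less continuous_on_box_dist_act continuous_on_const)
    moreover have "near \<epsilon> = V_space q m \<inter> (\<Union>g\<in>grp q m. {\<nu>. box_dist N \<mu> (act q m g \<nu>) < \<epsilon>})"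
      unfolding near_def by auto
    ultimately show ?thesis
      unfolding openin_open by blast
  qed
  moreover have "saturated q m (near \<epsilon>)" for \<epsilon>
    unfolding saturated_def
  proof (intro ballI)
    fix \<nu> h assume \<nu>: "\<nu> \<in> near \<epsilon>" and h: "h \<in> grp q m"
    then obtain g where g: "g \<in> grp q m" "box_dist N \<mu> (act q m g \<nu>) < \<epsilon>" "\<nu> \<in> V_space q m"
      unfolding near_def by blast
    obtain g' where "g' \<in> grp q m" "act q m g' (act q m h \<nu>) = act q m g \<nu>"
      using grp_act_quotient[OF g(1) h] by metis
    with g(2) have "box_dist N \<mu> (act q m g' (act q m h \<nu>)) < \<epsilon>"
      by simp
    with \<open>g' \<in> grp q m\<close> act_V_space[OF h g(3)] show "act q m h \<nu> \<in> near \<epsilon>"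
      unfolding near_def by blast
  qed
  moreover have "\<mu> \<in> near \<epsilon>" if "\<epsilon> > 0" for \<epsilon>
    unfolding near_def using \<mu> that block_pair_id_in_grp
    by (auto simp: act_id[OF \<mu>] box_dist_self
        intro!: bexI[of _ "block_pair q m id_mat id_mat id_mat"])
  ultimately have near_ev: "\<forall>\<^sub>F n in sequentially. \<mu>s n \<in> near \<epsilon>" if "\<epsilon> > 0" for \<epsilon>
    using conv that unfolding V_conv_def by blast
  have small: "\<forall>\<^sub>F n in sequentially. \<exists>g\<in>grp q m. box_dist N \<mu> (act q m g (\<mu>s n)) < \<epsilon>"
    if "\<epsilon> > 0" for \<epsilon>
    using near_ev[OF that] by (rule eventually_mono) (simp add: near_def)
  have "grp q m \<noteq> {}"
    using block_pair_id_in_grp by blast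
  then obtain gs where gs: "\<And>n. gs n \<in> grp q m"
    and dist_lim: "(\<lambda>n. box_dist N \<mu> (act q m (gs n) (\<mu>s n))) \<longlonglongrightarrow> 0"
    using minimizing_seq_exists[of "grp q m" "\<lambda>n g. box_dist N \<mu> (act q m g (\<mu>s n))",
        OF _ box_dist_nonneg small] by blast
  have "(\<lambda>n. act q m (gs n) (\<mu>s n) i j k) \<longlonglongrightarrow> \<mu> i j k" for i j k
  proof (cases "i < N \<and> j < N \<and> k < N")
    case True
    have "(\<lambda>n. act q m (gs n) (\<mu>s n) i j k - \<mu> i j k) \<longlonglongrightarrow> 0"
      by (rule Lim_null_comparison[OF _ dist_lim]) (use True box_dist_coeff_le in auto)
    then show ?thesis
      by (simp add: LIM_zero_iff)
  next
    case False
    then show ?thesis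
      using V_space_outside[OF act_V_space[OF gs \<mu>s]] V_space_outside[OF \<mu>]
      unfolding N_def by simp
  qed
  with gs that show ?thesis
    by blast
qed

subsection \<open>Algebraic convergence implies infinitesimal convergence\<close>

lemma lam_tendsto:
  assumes "\<And>i j k. (\<lambda>n. \<mu>s n i j k) \<longlonglongrightarrow> \<mu> i j k"
  shows "(\<lambda>n. lam q m (\<mu>s n) a b c) \<longlonglongrightarrow> lam q m \<mu> a b c"
  unfolding lam_def by (intro tendsto_intros assms) simp_all

lemma Rmk_tendsto:
  assumes "\<And>i j k. (\<lambda>n. \<mu>s n i j k) \<longlonglongrightarrow> \<mu> i j k"
  shows "(\<lambda>n. Rmk q m k (\<mu>s n) l) \<longlonglongrightarrow> Rmk q m k \<mu> l"
proof (induction k arbitrary: l)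
  case 0
  show ?case
    unfolding Rmk_0_eq rm0_def
    by (cases "length l = 4") (simp_all, intro tendsto_intros assms lam_tendsto[OF assms])
next
  case (Suc k)
  show ?case
    unfolding Rmk_Suc cov_deriv_def
    by (cases l) (auto intro!: tendsto_intros lam_tendsto[OF assms] Suc.IH)
qed

lemma Rmk_eqI:
  assumes lam: "\<And>a b c. a < m \<Longrightarrow> b < m \<Longrightarrow> c < m \<Longrightarrow> lam q m \<mu> a b c = lam q' m \<nu> a b c"
    and rm0: "\<And>x y z w. x < m \<Longrightarrow> y < m \<Longrightarrow> z < m \<Longrightarrow> w < m \<Longrightarrow>
                rm0 q m \<mu> x y z w = rm0 q' m \<nu> x y z w"
    and l: "set l \<subseteq> {..<m}"
  shows "Rmk q m k \<mu> l = Rmk q' m k \<nu> l"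
  using l
proof (induction k arbitrary: l)
  case 0
  have "\<forall>i<length l. l ! i < m"
    using "0.prems" nth_mem by blast
  then show ?case
    by (simp only: Rmk_0_eq) (auto intro!: rm0)
next
  case (Suc k)
  show ?case
  proof (cases l)
    case (Cons x r)
    have xr: "x < m" "set r \<subseteq> {..<m}"
      using Suc.prems Cons by auto
    have "set (r[p := j]) \<subseteq> {..<m}" if "j < m" for p j
      using xr(2) that set_update_subset_insert[of r p j] by auto
    moreover have "r ! p < m" if "p < length r" for p
      using xr(2) that nth_mem by blast
    ultimately show ?thesis
      unfolding Rmk_Suc cov_deriv_def Cons
      using xr by (auto intro!: sum.cong simp: lam Suc.IH)
  qed (simp add: Rmk_Suc cov_deriv_def)
qed

lemma Rmk_restrict:
  assumes "q' \<le> q" "d = q - q'"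
    and kill: "\<And>i b c. i < d \<Longrightarrow> b < m \<Longrightarrow> c < m \<Longrightarrow> \<rho> i (q + b) (q + c) = 0"
    and \<rho>': "\<rho>' = (\<lambda>i j k. if i < q' + m \<and> j < q' + m \<and> k < q' + m
                            then \<rho> (i + d) (j + d) (k + d) else 0)"
    and "set l \<subseteq> {..<m}"
  shows "Rmk q m k \<rho> l = Rmk q' m k \<rho>' l"
proof -
  have qd: "q = d + q'"
    using assms(1,2) by simp
  have mmm: "\<rho>' (q' + a) (q' + b) (q' + c) = \<rho> (q + a) (q + b) (q + c)"
    if "a < m" "b < m" "c < m" for a b c
    using that by (simp add: \<rho>' qd add_ac)
  have lam: "lam q m \<rho> a b c = lam q' m \<rho>' a b c" if "a < m" "b < m" "c < m" for a b c
    using that by (simp add: lam_def mmm)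
  have "rm0 q m \<rho> x y z w = rm0 q' m \<rho>' x y z w"
    if "x < m" "y < m" "z < m" "w < m" for x y z w
  proof -
    have "(\<Sum>i<q. \<rho> (q + x) (q + y) i * \<rho> i (q + z) (q + w))
        = (\<Sum>i<q'. \<rho> (q + x) (q + y) (d + i) * \<rho> (d + i) (q + z) (q + w))"
      unfolding qd sum_lessThan_add using that kill by (simp add: qd)
    also have "\<dots> = (\<Sum>i<q'. \<rho>' (q' + x) (q' + y) i * \<rho>' i (q' + z) (q' + w))"
      using that by (intro sum.cong refl) (simp add: \<rho>' qd add_ac)
    finally show ?thesis
      unfolding rm0_def using that by (simp add: lam mmm)
  qed
  with lam show ?thesis
    using assms(5) by (rule Rmk_eqI)
qed

lemma kills_m_unit_vector:
  assumes "kills_m q m \<rho> (\<lambda>i'. if i' = i then 1 else 0)" "i < q" "b < m" "c < m"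
  shows "\<rho> i (q + b) (q + c) = 0"
proof -
  have "(\<Sum>i'<q. if i' = i then \<rho> i' (q + b) (q + c) else 0)
      = (\<Sum>i'<q. (if i' = i then 1 else 0) * \<rho> i' (q + b) (q + c))"
    by (intro sum.cong) auto
  also have "\<dots> = 0"
    using assms(1,3,4) unfolding kills_m_def by simp
  finally show ?thesis
    using assms(2) by simp
qed

lemma restr_rel_Rmk:
  assumes "restr_rel q m \<mu> q' \<nu>"
  obtains E where "orth m E"
    "\<And>k l. set l \<subseteq> {..<m} \<Longrightarrow> Rmk q' m k \<nu> l = act_t m E (Rmk q m k \<mu>) l"
proof -
  define d where "d = q - q'"
  obtain A Ai where "q' \<le> q" and A: "is_inverse_pair q A Ai"
    and ker: "\<forall>z. (\<forall>i\<ge>q. z i = 0) \<longrightarrow>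
               (kills_m q m (act q m (block_pair q m A Ai id_mat) \<mu>) z \<longleftrightarrow> (\<forall>i\<ge>d. z i = 0))"
    and cls: "same_class q' m (\<lambda>i j k. if i < q' + m \<and> j < q' + m \<and> k < q' + m
               then act q m (block_pair q m A Ai id_mat) \<mu> (i + d) (j + d) (k + d) else 0) \<nu>"
    using assms unfolding restr_rel_def Let_def transp_id_mat d_def by blast
  define \<rho> where "\<rho> = act q m (block_pair q m A Ai id_mat) \<mu>"
  define \<rho>' where "\<rho>' = (\<lambda>i j k. if i < q' + m \<and> j < q' + m \<and> k < q' + m
                                 then \<rho> (i + d) (j + d) (k + d) else 0)"
  obtain C Ci E where "is_inverse_pair q' C Ci" "orth m E"
    and \<nu>: "\<nu> = act q' m (block_pair q' m C Ci E) \<rho>'"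
    using cls unfolding same_class_def Bex_def grp_iff \<rho>'_def \<rho>_def by blast
  have kill: "\<rho> i (q + b) (q + c) = 0" if "i < d" "b < m" "c < m" for i b c
    using ker that unfolding \<rho>_def d_def by (intro kills_m_unit_vector) auto
  have "Rmk q' m k \<nu> l = act_t m E (Rmk q m k \<mu>) l" if l: "set l \<subseteq> {..<m}" for k l
  proof -
    have "Rmk q' m k \<nu> l = act_t m E (Rmk q' m k \<rho>') l"
      unfolding \<nu> using Rmk_act[OF \<open>orth m E\<close> \<open>is_inverse_pair q' C Ci\<close> l] .
    also have "\<dots> = act_t m E (Rmk q m k \<mu>) l"
    proof (rule act_t_cong)
      fix ys assume ys: "length ys = length l" "set ys \<subseteq> {..<m}"
      have "Rmk q' m k \<rho>' ys = Rmk q m k \<rho> ys"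
        by (rule Rmk_restrict[OF \<open>q' \<le> q\<close> d_def kill \<rho>'_def ys(2), symmetric]) auto
      also have "\<dots> = Rmk q m k \<mu> ys"
        unfolding \<rho>_def by (rule Rmk_act_GL[OF A ys(2)])
      finally show "Rmk q' m k \<rho>' ys = Rmk q m k \<mu> ys" .
    qed
    finally show ?thesis .
  qed
  with \<open>orth m E\<close> that show ?thesis by blast
qed

lemma inf_conv_if_V_conv:
  assumes conv: "V_conv q m \<mu>s \<mu>" and \<mu>: "\<mu> \<in> V_space q m" and \<mu>s: "\<And>n. \<mu>s n \<in> V_space q m"
    and E: "orth m E"
    and Rmk_\<nu>: "\<And>k l. set l \<subseteq> {..<m} \<Longrightarrow> Rmk q' m k \<nu> l = act_t m E (Rmk q m k \<mu>) l"
  shows "inf_conv q m \<mu>s q' \<nu>"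
proof -
  obtain gs where gs: "\<And>n. gs n \<in> grp q m"
    and lim: "\<And>i j k. (\<lambda>n. act q m (gs n) (\<mu>s n) i j k) \<longlonglongrightarrow> \<mu> i j k"
    using V_conv_lift[OF conv \<mu> \<mu>s] by blast
  have "\<forall>n. \<exists>B. orth m B \<and> (\<forall>k l. set l \<subseteq> {..<m} \<longrightarrow>
          Rmk q m k (act q m (gs n) (\<mu>s n)) l = act_t m B (Rmk q m k (\<mu>s n)) l)"
    using grp_act_Rmk[OF gs] by metis
  from choice[OF this] obtain Bs where Bs: "\<And>n. orth m (Bs n)"
    and Rmk_gs: "\<And>n k l. set l \<subseteq> {..<m} \<Longrightarrow>
                   Rmk q m k (act q m (gs n) (\<mu>s n)) l = act_t m (Bs n) (Rmk q m k (\<mu>s n)) l"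
    by blast
  have lim_Rmk: "(\<lambda>n. act_t m (mmul m E (Bs n)) (Rmk q m k (\<mu>s n)) l) \<longlonglongrightarrow> Rmk q' m k \<nu> l"
    if l: "set l \<subseteq> {..<m}" for k l
  proof -
    have "act_t m (mmul m E (Bs n)) (Rmk q m k (\<mu>s n)) l
        = act_t m E (Rmk q m k (act q m (gs n) (\<mu>s n))) l" for n
      unfolding act_t_mmul using Rmk_gs by (intro act_t_cong) auto
    moreover have "(\<lambda>n. act_t m E (Rmk q m k (act q m (gs n) (\<mu>s n))) l)
        \<longlonglongrightarrow> act_t m E (Rmk q m k \<mu>) l"
      by (intro act_t_tendsto Rmk_tendsto lim)
    ultimately show ?thesis
      using Rmk_\<nu>[OF l] by simp
  qed
  show ?thesis
    unfolding inf_conv_def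
    by (intro allI impI exI[of _ "\<lambda>n. mmul m E (Bs n)"]) (simp add: orth_mmul[OF E Bs] lim_Rmk)
qed

lemma alg_conv_imp_inf_conv:
  assumes "\<And>n. Hloc q m (\<mu>s n)" and "alg_conv q m \<mu>s q' \<nu>"
  shows "inf_conv q m \<mu>s q' \<nu>"
proof -
  have \<mu>s: "\<mu>s n \<in> V_space q m" for n
    using assms(1) unfolding Hloc_def H12_def by blast
  from assms(2) consider (same) "q' = q" "V_conv q m \<mu>s \<nu>" "Hloc q' m \<nu>"
    | (restricted) \<mu> where "H12 q m \<mu>" "V_conv q m \<mu>s \<mu>" "restr_rel q m \<mu> q' \<nu>"
    unfolding alg_conv_def by blast
  then show ?thesis
  proof cases
    case same
    then have "\<nu> \<in> V_space q m"
      unfolding Hloc_def H12_def by blast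
    with same show ?thesis
      using act_t_id by (intro inf_conv_if_V_conv[OF same(2) _ \<mu>s orth_id]) simp_all
  next
    case restricted
    then have "\<mu> \<in> V_space q m"
      unfolding H12_def by blast
    moreover obtain E where "orth m E"
      "\<And>k l. set l \<subseteq> {..<m} \<Longrightarrow> Rmk q' m k \<nu> l = act_t m E (Rmk q m k \<mu>) l"
      using restr_rel_Rmk[OF restricted(3)] by blast
    ultimately show ?thesis
      using inf_conv_if_V_conv[OF restricted(2) _ \<mu>s] by blast
  qed
qed

subsection \<open>A flat counterexample to the converse\<close>

definition zero_bracket :: brk where
  "zero_bracket i j k = 0"

text \<open>The Lie algebra e(2) of rigid motions of the plane: e_0 rotates the plane spanned by
  e_1 and e_2.\<close>
definition e2_bracket :: brk where
  "e2_bracket i j k =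
     (if i = 0 \<and> j = 1 \<and> k = 2 then 1 else if i = 1 \<and> j = 0 \<and> k = 2 then -1
      else if i = 0 \<and> j = 2 \<and> k = 1 then -1 else if i = 2 \<and> j = 0 \<and> k = 1 then 1 else 0)"

lemma Hloc_zero_bracket: "Hloc 0 3 zero_bracket"
  unfolding Hloc_def H12_def kills_m_def V_space_def jacobi_def zero_bracket_def by simp

lemma Hloc_e2_bracket: "Hloc 0 3 e2_bracket"
proof -
  have all3: "(\<forall>i<(3::nat). P i) \<longleftrightarrow> P 0 \<and> P 1 \<and> P 2" for P
    by (auto simp: numeral_3_eq_3 numeral_2_eq_2 less_Suc_eq)
  have sum3: "(\<Sum>d<(3::nat). f d) = f 0 + f 1 + f 2" for f :: "nat \<Rightarrow> real"
    by (simp add: numeral_3_eq_3 numeral_2_eq_2)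
  have "e2_bracket \<in> V_space 0 3"
    unfolding V_space_def e2_bracket_def by auto
  moreover have "jacobi 3 e2_bracket"
    unfolding jacobi_def all3 sum3 by (simp add: e2_bracket_def)
  ultimately show ?thesis
    unfolding Hloc_def H12_def kills_m_def by simp
qed

lemma Rmk_eq_0_if_flat:
  assumes "\<And>x y z w. rm0 q m \<mu> x y z w = 0"
  shows "Rmk q m k \<mu> = (\<lambda>_. 0)"
proof (induction k)
  case 0
  show ?case
    by (rule ext) (simp only: Rmk_0_eq, simp add: assms)
next
  case (Suc k)
  then show ?case
    unfolding Rmk_Suc cov_deriv_def by (auto split: list.split)
qed

lemma rm0_zero_bracket: "rm0 0 3 zero_bracket x y z w = 0"
  unfolding rm0_def lam_def zero_bracket_def by simp

lemma rm0_e2_bracket: "rm0 0 3 e2_bracket x y z w = 0"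
proof -
  have lam: "lam 0 3 e2_bracket a b c =
      (if a = 0 then (if b = 1 \<and> c = 2 then 1 else if b = 2 \<and> c = 1 then -1 else 0) else 0)"
    for a b c
    unfolding lam_def e2_bracket_def by auto
  have bracket_term: "e2_bracket x y c * lam 0 3 e2_bracket c z w = 0" for c
    by (cases "c = 0") (auto simp: lam e2_bracket_def)
  have commutator_term: "lam 0 3 e2_bracket x v w * lam 0 3 e2_bracket y z v
      - lam 0 3 e2_bracket y v w * lam 0 3 e2_bracket x z v = 0" for v
    by (cases "x = 0"; cases "y = 0") (auto simp: lam)
  show ?thesis
    unfolding rm0_def by (simp only: add_0 bracket_term commutator_term) simp
qed

lemma inf_conv_zero_e2: "inf_conv 0 3 (\<lambda>n. zero_bracket) 0 e2_bracket"
proof -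
  have "act_t 3 id_mat (Rmk 0 3 k zero_bracket) l = Rmk 0 3 k e2_bracket l" for k l
    using Rmk_eq_0_if_flat[OF rm0_zero_bracket] Rmk_eq_0_if_flat[OF rm0_e2_bracket]
    by (simp add: act_t_zero)
  then show ?thesis
    unfolding inf_conv_def by (intro allI impI exI[of _ "\<lambda>n. id_mat"]) (simp add: orth_id)
qed

lemma not_V_conv_zero_e2: "\<not> V_conv 0 3 (\<lambda>n. zero_bracket) e2_bracket"
proof
  assume conv: "V_conv 0 3 (\<lambda>n. zero_bracket) e2_bracket"
  define W where "W = {\<mu> \<in> V_space 0 3. \<mu> \<noteq> zero_bracket}"
  have "open (\<Union>a b c. {\<mu>::brk. 0 < \<bar>\<mu> a b c\<bar>})"
    by (intro open_UN ballI open_Collect_less continuous_intros continuous_on_bracket_coeff)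
  moreover have "W = V_space 0 3 \<inter> (\<Union>a b c. {\<mu>::brk. 0 < \<bar>\<mu> a b c\<bar>})"
    unfolding W_def zero_bracket_def by (auto simp: fun_eq_iff)
  ultimately have "openin (top_of_set (V_space 0 3)) W"
    unfolding openin_open by blast
  moreover have "saturated 0 3 W"
    unfolding saturated_def
  proof (intro ballI)
    fix \<mu> h assume \<mu>: "\<mu> \<in> W" and h: "h \<in> grp 0 3"
    have \<mu>V: "\<mu> \<in> V_space 0 3"
      using \<mu> unfolding W_def by blast
    obtain g' where "\<And>\<nu>. act 0 3 g' (act 0 3 h \<nu>) = act 0 3 (block_pair 0 3 id_mat id_mat id_mat) \<nu>"
      using grp_act_quotient[OF block_pair_id_in_grp h] by metis
    then have "act 0 3 g' (act 0 3 h \<mu>) = \<mu>"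
      using act_id[OF \<mu>V] by simp
    moreover have "act 0 3 g' zero_bracket = zero_bracket"
      unfolding act_def zero_bracket_def by (intro ext) simp
    ultimately have "act 0 3 h \<mu> \<noteq> zero_bracket"
      using \<mu> unfolding W_def by auto
    then show "act 0 3 h \<mu> \<in> W"
      unfolding W_def using act_V_space[OF h \<mu>V] by blast
  qed
  moreover have "e2_bracket \<in> W"
    using Hloc_e2_bracket unfolding W_def Hloc_def H12_def
    by (auto simp: fun_eq_iff e2_bracket_def zero_bracket_def)
  ultimately have "\<forall>\<^sub>F n in sequentially. zero_bracket \<in> W"
    using conv unfolding V_conv_def by blast
  then show False
    unfolding W_def by simp
qed

lemma inf_conv_not_alg_conv:
  "\<exists>m q \<mu>s q' \<nu>. 1 \<le> m \<and> 2 * q \<le> m * (m - 1) \<and> (\<forall>n. Hloc q m (\<mu>s n)) \<and>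
     Hloc q' m \<nu> \<and> inf_conv q m \<mu>s q' \<nu> \<and> \<not> alg_conv q m \<mu>s q' \<nu>"
proof (intro exI conjI)
  show "\<not> alg_conv 0 3 (\<lambda>n. zero_bracket) 0 e2_bracket"
    unfolding alg_conv_def using not_V_conv_zero_e2 by simp
qed (auto simp: Hloc_zero_bracket Hloc_e2_bracket inf_conv_zero_e2)

theorem proposition3p5:
  shows "(\<forall>m q \<mu>s q' \<nu>. 1 \<le> m \<and> 2 * q \<le> m * (m - 1) \<and> (\<forall>n. Hloc q m (\<mu>s n)) \<and>
            Hloc q' m \<nu> \<and> alg_conv q m \<mu>s q' \<nu> \<longrightarrow> inf_conv q m \<mu>s q' \<nu>)
       \<and> (\<exists>m q \<mu>s q' \<nu>. 1 \<le> m \<and> 2 * q \<le> m * (m - 1) \<and> (\<forall>n. Hloc q m (\<mu>s n)) \<and>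
            Hloc q' m \<nu> \<and> inf_conv q m \<mu>s q' \<nu> \<and> \<not> alg_conv q m \<mu>s q' \<nu>)"
  using alg_conv_imp_inf_conv inf_conv_not_alg_conv by blast

end
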